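(* Consider problem (P) and suppose Assumptions A and B hold. Let $\{(x^t,L_g^t)\}$ be generated by SCP$_{ls}$ and let $\Omega$ be the set of accumulation points of $\{(x^{t+1},x^t,L_g^t)\}$. Then $\Omega\neq\emptyset$ and $\bar F\equiv\bar F^*$ on $\Omega$, where $\bar F^*:=\lim_{t\to\infty}\bar F(x^{t+1},x^t,L_g^t)$ (this limit exists and is finite).
   Context: Problem (P): $\min_{x\in\mathbb R^n}F(x):=f(x)+P_1(x)-P_2(x)+\delta_{\{g\le 0\}}(x)$, where $f:\mathbb R^n\to\mathbb R$ is continuously differentiable, $P_1,P_2:\mathbb R^n\to\mathbb R$ are convex and continuous, $g=(g_1,\dots,g_m):\mathbb R^n\to\mathbb R^m$ is continuous with $\{x:g(x)\le0\}\neq\emptyset$ (componentwise inequalities), $\delta_C$ the indicator function of $C$. Assumption A: (i) $\nabla f$ is Lipschitz with modulus $L_f$; (ii) each $g_i$ is differentiable with $\nabla g_i$ Lipschitz with modulus $L_{g_i}$; (iii) $F$ is level-bounded. Assumption B (MFCQ): each $g_i$ is continuously differentiable and for every $x$ with $g(x)\le0$ there is $d$ with $\langle\nabla g_i(x),d\rangle<0$ for all $i\in I(x):=\{j:g_j(x)=0\}$. $\bar G(x,y,w)\in\mathbb R^m$ ($x,y\in\mathbb R^n,w\in\mathbb R^m$) has components $\bar G_i(x,y,w)=g_i(y)+\langle\nabla g_i(y),x-y\rangle+\frac{w_i}{2}\|x-y\|^2$, and $\bar F(x,y,w):=f(x)+P_1(x)-P_2(x)+\delta_{\{\bar G\le0\}}(x,y,w)$.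 Algorithm SCP$_{ls}$: fix $c>0$, $0<\underline L<\bar L$, $\tau>1$ and $x^0$ with $g(x^0)\le0$. For $t=0,1,2,\dots$: (1) pick any $\xi^t\in\partial P_2(x^t)$; (2) choose $L_f^{t,0}\in[\underline L,\bar L]$, $L_g^{t,0}\in[\underline L,\bar L]^m$ arbitrarily, set $\tilde L_f=L_f^{t,0}$, $\tilde L_g=L_g^{t,0}$; (3) compute $\tilde x$ solving: minimize $\langle\nabla f(x^t)-\xi^t,x-x^t\rangle+\frac{\tilde L_f}{2}\|x-x^t\|^2+P_1(x)$ subject to $\bar G(x,x^t,\tilde L_g)\le0$. If $g(\tilde x)\le0$ and $F(\tilde x)\le F(x^t)-\frac c2\|\tilde x-x^t\|^2$, set $x^{t+1}=\tilde x$, $L_f^t=\tilde L_f$, $L_g^t=\tilde L_g$ and go to iteration $t+1$; otherwise, if $g(\tilde x)\not\le0$ replace $\tilde L_g$ by $\tau\tilde L_g$, while if $g(\tilde x)\le0$ but the decrease inequality fails replace $\tilde L_f$ by $\tau\tilde L_f$, and repeat step (3). *)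

theory Defs
  imports "HOL-Analysis.Analysis"
begin

text \<open>Constraint functions are indexed by a finite type 'm (so m = CARD('m));
  the variable x ranges over a Euclidean space 'a (playing the role of R^n).\<close>

definition feasible :: "('m::finite \<Rightarrow> 'a \<Rightarrow> real) \<Rightarrow> 'a \<Rightarrow> bool" where
  "feasible g x \<longleftrightarrow> (\<forall>i. g i x \<le> 0)"

definition Fobj :: "('a \<Rightarrow> real) \<Rightarrow> ('a \<Rightarrow> real) \<Rightarrow> ('a \<Rightarrow> real) \<Rightarrow>
    ('m::finite \<Rightarrow> 'a \<Rightarrow> real) \<Rightarrow> 'a \<Rightarrow> ereal" where
  "Fobj f P1 P2 g x = (if feasible g x then ereal (f x + P1 x - P2 x) else \<infinity>)"

definition level_bounded :: "('a::real_normed_vector \<Rightarrow> ereal) \<Rightarrow> bool" where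
  "level_bounded F \<longleftrightarrow> (\<forall>\<alpha>::real. bounded {x. F x \<le> ereal \<alpha>})"

definition convex_subdiff :: "('a::real_inner \<Rightarrow> real) \<Rightarrow> 'a \<Rightarrow> 'a set" where
  "convex_subdiff P x = {\<xi>. \<forall>y. P y \<ge> P x + inner \<xi> (y - x)}"

definition Gbar :: "('m::finite \<Rightarrow> 'a::real_inner \<Rightarrow> real) \<Rightarrow> ('m \<Rightarrow> 'a \<Rightarrow> 'a) \<Rightarrow>
    'a \<Rightarrow> 'a \<Rightarrow> real^'m \<Rightarrow> 'm \<Rightarrow> real" where
  "Gbar g gradg x y w i = g i y + inner (gradg i y) (x - y) + w $ i / 2 * (norm (x - y))\<^sup>2"

definition Fbar :: "('a::real_inner \<Rightarrow> real) \<Rightarrow> ('a \<Rightarrow> real) \<Rightarrow> ('a \<Rightarrow> real) \<Rightarrow>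
    ('m::finite \<Rightarrow> 'a \<Rightarrow> real) \<Rightarrow> ('m \<Rightarrow> 'a \<Rightarrow> 'a) \<Rightarrow> 'a \<Rightarrow> 'a \<Rightarrow> real^'m \<Rightarrow> ereal" where
  "Fbar f P1 P2 g gradg x y w =
     (if (\<forall>i. Gbar g gradg x y w i \<le> 0) then ereal (f x + P1 x - P2 x) else \<infinity>)"

definition scp_sub :: "('a::real_inner \<Rightarrow> 'a) \<Rightarrow> ('a \<Rightarrow> real) \<Rightarrow>
    ('m::finite \<Rightarrow> 'a \<Rightarrow> real) \<Rightarrow> ('m \<Rightarrow> 'a \<Rightarrow> 'a) \<Rightarrow>
    'a \<Rightarrow> 'a \<Rightarrow> real \<Rightarrow> real^'m \<Rightarrow> 'a \<Rightarrow> bool" where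
  "scp_sub gradf P1 g gradg xt \<xi> lf lg z \<longleftrightarrow>
     is_arg_min (\<lambda>x. inner (gradf xt - \<xi>) (x - xt) + lf / 2 * (norm (x - xt))\<^sup>2 + P1 x)
                (\<lambda>x. \<forall>i. Gbar g gradg x xt lg i \<le> 0) z"

definition scp_accept :: "('a::real_normed_vector \<Rightarrow> real) \<Rightarrow> ('a \<Rightarrow> real) \<Rightarrow> ('a \<Rightarrow> real) \<Rightarrow>
    ('m::finite \<Rightarrow> 'a \<Rightarrow> real) \<Rightarrow> real \<Rightarrow> 'a \<Rightarrow> 'a \<Rightarrow> bool" where
  "scp_accept f P1 P2 g c xt z \<longleftrightarrow>
     feasible g z \<and> Fobj f P1 P2 g z \<le> Fobj f P1 P2 g xt - ereal (c / 2 * (norm (z - xt))\<^sup>2)"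

text \<open>One outer iteration t of SCP_ls: from x^t produce x^{t+1} with accepted
  parameters L_f^t, L_g^t, through a finite sequence of trial parameters
  (lfs k, lgs k) and trial points zs k, k = 0..K.\<close>
definition scp_ls_iter :: "('a::real_inner \<Rightarrow> real) \<Rightarrow> ('a \<Rightarrow> 'a) \<Rightarrow> ('a \<Rightarrow> real) \<Rightarrow> ('a \<Rightarrow> real) \<Rightarrow>
    ('m::finite \<Rightarrow> 'a \<Rightarrow> real) \<Rightarrow> ('m \<Rightarrow> 'a \<Rightarrow> 'a) \<Rightarrow>
    real \<Rightarrow> real \<Rightarrow> real \<Rightarrow> real \<Rightarrow> 'a \<Rightarrow> 'a \<Rightarrow> real \<Rightarrow> real^'m \<Rightarrow> bool" where
  "scp_ls_iter f gradf P1 P2 g gradg c Llo Lup \<tau> xt xnext Lft Lgt \<longleftrightarrow>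
     (\<exists>\<xi> (lfs :: nat \<Rightarrow> real) (lgs :: nat \<Rightarrow> real^'m) (zs :: nat \<Rightarrow> 'a) (K :: nat).
        \<xi> \<in> convex_subdiff P2 xt \<and>
        Llo \<le> lfs 0 \<and> lfs 0 \<le> Lup \<and>
        (\<forall>i. Llo \<le> lgs 0 $ i \<and> lgs 0 $ i \<le> Lup) \<and>
        (\<forall>k\<le>K. scp_sub gradf P1 g gradg xt \<xi> (lfs k) (lgs k) (zs k)) \<and>
        (\<forall>k<K. \<not> scp_accept f P1 P2 g c xt (zs k) \<and>
               (if feasible g (zs k)
                then lfs (Suc k) = \<tau> * lfs k \<and> lgs (Suc k) = lgs k
                else lfs (Suc k) = lfs k \<and> lgs (Suc k) = \<tau> *\<^sub>R lgs k)) \<and>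
        scp_accept f P1 P2 g c xt (zs K) \<and>
        xnext = zs K \<and> Lft = lfs K \<and> Lgt = lgs K)"

definition scp_ls_seq :: "('a::real_inner \<Rightarrow> real) \<Rightarrow> ('a \<Rightarrow> 'a) \<Rightarrow> ('a \<Rightarrow> real) \<Rightarrow> ('a \<Rightarrow> real) \<Rightarrow>
    ('m::finite \<Rightarrow> 'a \<Rightarrow> real) \<Rightarrow> ('m \<Rightarrow> 'a \<Rightarrow> 'a) \<Rightarrow>
    real \<Rightarrow> real \<Rightarrow> real \<Rightarrow> real \<Rightarrow> (nat \<Rightarrow> 'a) \<Rightarrow> (nat \<Rightarrow> real) \<Rightarrow> (nat \<Rightarrow> real^'m) \<Rightarrow> bool" where
  "scp_ls_seq f gradf P1 P2 g gradg c Llo Lup \<tau> x Lf Lg \<longleftrightarrow>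
     feasible g (x 0) \<and>
     (\<forall>t. scp_ls_iter f gradf P1 P2 g gradg c Llo Lup \<tau> (x t) (x (Suc t)) (Lf t) (Lg t))"

definition accum_points :: "(nat \<Rightarrow> 'b::topological_space) \<Rightarrow> 'b set" where
  "accum_points s = {z. \<exists>r. strict_mono r \<and> (s \<circ> r) \<longlonglongrightarrow> z}"

end

theory Submission
  imports Defs
begin

text \<open>Each accepted step lowers the objective, so the iterates stay in a sublevel set of F and
  are bounded, and the objective values decrease to a limit. Because a trial point violating
  the constraints can only occur while some entry of the trial L_g lies below a common Lipschitz
  constant M of the constraint gradients (the descent lemma makes the subproblem's constraint
  majorise g once all entries exceed M), the line search inflates L_g only boundedly often, so
  the accepted L_g^t stay bounded. Hence the triples (x^{t+1}, x^t, L_g^t) have accumulation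
  points; there the linearised constraint still holds by continuity, and the objective equals
  its limiting value.\<close>

lemma descent_lemma:
  fixes \<phi> :: "'a::real_inner \<Rightarrow> real"
  assumes grad: "\<And>z. (\<phi> has_derivative (\<lambda>h. inner (G z) h)) (at z)"
    and lip: "\<And>y z. norm (G y - G z) \<le> L * norm (y - z)"
  shows "\<phi> z \<le> \<phi> y + inner (G y) (z - y) + L / 2 * (norm (z - y))\<^sup>2"
proof -
  define d where "d = z - y"
  define \<psi> where "\<psi> = (\<lambda>s::real. \<phi> (y + s *\<^sub>R d) - s * inner (G y) d - L / 2 * s\<^sup>2 * (norm d)\<^sup>2)"
  define \<psi>' where "\<psi>' = (\<lambda>s::real. inner (G (y + s *\<^sub>R d)) d - inner (G y) d - L * s * (norm d)\<^sup>2)"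
  have deriv: "(\<psi> has_real_derivative \<psi>' s) (at s)" for s
  proof -
    have "((\<lambda>s. y + s *\<^sub>R d) has_derivative (\<lambda>h. h *\<^sub>R d)) (at s)"
      by (auto intro!: derivative_eq_intros)
    from has_derivative_compose[OF this grad]
    have comp: "((\<lambda>s. \<phi> (y + s *\<^sub>R d)) has_real_derivative inner (G (y + s *\<^sub>R d)) d) (at s)"
      unfolding has_field_derivative_def by (simp add: mult.commute[of _ "inner _ d"])
    show ?thesis unfolding \<psi>_def \<psi>'_def
      by (rule derivative_eq_intros comp | simp)+
  qed
  have deriv_nonpos: "\<psi>' s \<le> 0" if "0 \<le> s" for s
  proof -
    have "inner (G (y + s *\<^sub>R d)) d - inner (G y) d = inner (G (y + s *\<^sub>R d) - G y) d"
      by (simp add: inner_diff_left)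
    also have "\<dots> \<le> norm (G (y + s *\<^sub>R d) - G y) * norm d" by (rule norm_cauchy_schwarz)
    also have "\<dots> \<le> (L * norm (s *\<^sub>R d)) * norm d"
      using lip[of "y + s *\<^sub>R d" y] by (simp add: mult_right_mono)
    also have "\<dots> = L * s * (norm d)\<^sup>2" using that by (simp add: power2_eq_square)
    finally show ?thesis unfolding \<psi>'_def by simp
  qed
  obtain \<xi> where "0 < \<xi>" "\<psi> 1 - \<psi> 0 = (1 - 0) * \<psi>' \<xi>"
    using MVT2[of 0 1 \<psi> \<psi>'] deriv by auto
  with deriv_nonpos[of \<xi>] have "\<psi> 1 \<le> \<psi> 0" by simp
  then show ?thesis unfolding \<psi>_def d_def by simp
qed

lemma finite_family_common_Lipschitz:
  fixes G :: "'m::finite \<Rightarrow> 'a::real_normed_vector \<Rightarrow> 'b::real_normed_vector"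
  assumes "\<And>i. \<exists>L. \<forall>y z. norm (G i y - G i z) \<le> L * norm (y - z)"
  obtains M where "\<And>i y z. norm (G i y - G i z) \<le> M * norm (y - z)"
proof -
  from assms obtain L where L: "\<And>i y z. norm (G i y - G i z) \<le> L i * norm (y - z)" by metis
  have "L i \<le> (\<Sum>j\<in>UNIV. \<bar>L j\<bar>)" for i
    using member_le_sum[of i UNIV "\<lambda>j. \<bar>L j\<bar>"] by simp
  then have "norm (G i y - G i z) \<le> (\<Sum>j\<in>UNIV. \<bar>L j\<bar>) * norm (y - z)" for i y z
    using L[of i y z] by (meson mult_right_mono norm_ge_zero order_trans)
  then show thesis by (rule that)
qed

lemma bounded_range_vec_if_entries_bounded:
  fixes w :: "nat \<Rightarrow> real^'m"
  assumes "\<And>t i. \<bar>w t $ i\<bar> \<le> B"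
  shows "bounded (range w)"
proof -
  have "norm (w t) \<le> CARD('m) * B" for t
  proof -
    have "norm (w t) \<le> (\<Sum>i\<in>UNIV. \<bar>w t $ i\<bar>)" by (rule norm_le_l1_cart)
    also have "\<dots> \<le> (\<Sum>i\<in>(UNIV::'m set). B)" by (rule sum_mono) (rule assms)
    finally show ?thesis by simp
  qed
  then show ?thesis unfolding bounded_iff by blast
qed

lemma level_bounded_imp_bounded_range:
  assumes "level_bounded F" and "\<And>t. F (x t) \<le> ereal \<alpha>"
  shows "bounded (range x)"
  using assms unfolding level_bounded_def by (blast intro: bounded_subset)

lemma decseq_continuous_bounded_convergent:
  fixes h :: "'a::heine_borel \<Rightarrow> real"
  assumes "continuous_on UNIV h" and "bounded (range x)" and "decseq (\<lambda>t. h (x t))"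
  obtains l where "(\<lambda>t. h (x t)) \<longlonglongrightarrow> l"
proof -
  have "compact (closure (range x))" using assms(2) compact_closure by blast
  moreover have "closure (range x) \<noteq> {}" by simp
  moreover have "continuous_on (closure (range x)) h" using assms(1) continuous_on_subset by blast
  ultimately obtain z where z: "\<forall>y\<in>closure (range x). h z \<le> h y"
    using continuous_attains_inf by blast
  have "x t \<in> closure (range x)" for t by (simp add: closure_def)
  with z have "\<forall>t. h z \<le> h (x t)" by blast
  then show thesis using decseq_convergent[OF assms(3)] that by blast
qed

lemma accum_points_nonempty:
  fixes s :: "nat \<Rightarrow> 'a::heine_borel"
  assumes "bounded (range s)"
  shows "accum_points s \<noteq> {}"
  using bounded_imp_convergent_subsequence[OF assms] unfolding accum_points_def by blast

lemma Gbar_nonpos_imp_feasible: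
  assumes grad: "\<And>i z. (g i has_derivative (\<lambda>h. inner (gradg i z) h)) (at z)"
    and lip: "\<And>i y z. norm (gradg i y - gradg i z) \<le> M * norm (y - z)"
    and large: "\<And>i. M \<le> w $ i"
    and lin: "\<And>i. Gbar g gradg z y w i \<le> 0"
  shows "feasible g z"
  unfolding feasible_def
proof
  fix i
  have "g i z \<le> g i y + inner (gradg i y) (z - y) + M / 2 * (norm (z - y))\<^sup>2"
    by (rule descent_lemma[OF grad lip])
  also have "\<dots> \<le> Gbar g gradg z y w i"
    unfolding Gbar_def using large[of i] by (simp add: mult_right_mono)
  also have "\<dots> \<le> 0" by (rule lin)
  finally show "g i z \<le> 0" .
qed

lemma tendsto_Gbar:
  assumes "continuous_on UNIV (g i)" and "continuous_on UNIV (gradg i)"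
    and "z \<longlonglongrightarrow> u" and "y \<longlonglongrightarrow> v" and "w \<longlonglongrightarrow> W"
  shows "(\<lambda>n. Gbar g gradg (z n) (y n) (w n) i) \<longlonglongrightarrow> Gbar g gradg u v W i"
  unfolding Gbar_def
  by (intro tendsto_intros tendsto_vec_nth assms
      continuous_on_tendsto_compose[OF assms(1)] continuous_on_tendsto_compose[OF assms(2)]) auto

text \<open>The bound \<open>\<tau> M / L\<close> comes from the last inflation: it is applied only to a parameter
  with some entry below M, whose scale factor is therefore below \<open>M / L\<close>.\<close>

lemma backtracking_scale_bounded:
  fixes lgs :: "nat \<Rightarrow> real^'m"
  assumes init: "\<And>i. L \<le> lgs 0 $ i" and L_pos: "0 < L" and tau_gt: "1 < \<tau>"
    and step: "\<And>k. k < K \<Longrightarrow>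
      lgs (Suc k) = lgs k \<or> ((\<exists>i. lgs k $ i < M) \<and> lgs (Suc k) = \<tau> *\<^sub>R lgs k)"
    and "k \<le> K"
  shows "\<exists>a. lgs k = a *\<^sub>R lgs 0 \<and> 1 \<le> a \<and> a \<le> max 1 (\<tau> * M / L)"
  using \<open>k \<le> K\<close>
proof (induction k)
  case 0
  show ?case by (intro exI[of _ 1]) simp
next
  case (Suc k)
  then obtain a where a: "lgs k = a *\<^sub>R lgs 0" "1 \<le> a" "a \<le> max 1 (\<tau> * M / L)" by auto
  from step[of k] Suc.prems consider "lgs (Suc k) = lgs k"
    | i where "lgs k $ i < M" "lgs (Suc k) = \<tau> *\<^sub>R lgs k" by auto
  then show ?case
  proof cases
    case 1
    with a show ?thesis by auto
  next
    case (2 i)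
    have "a * L \<le> a * lgs 0 $ i" using init a(2) by (intro mult_left_mono) auto
    with 2 a(1) have "a * L < M" by simp
    then have "\<tau> * a \<le> \<tau> * M / L"
      using L_pos tau_gt by (simp add: field_simps)
    moreover have "1 \<le> \<tau> * a" using a(2) tau_gt mult_mono[of 1 \<tau> 1 a] by simp
    ultimately show ?thesis using 2 a(1) by (intro exI[of _ "\<tau> * a"]) auto
  qed
qed

lemma scp_ls_iter_accepted:
  assumes "scp_ls_iter f gradf P1 P2 g gradg c Llo Lup \<tau> xt xn Lft Lgt"
  shows "scp_accept f P1 P2 g c xt xn" and "\<And>i. Gbar g gradg xn xt Lgt i \<le> 0"
  using assms unfolding scp_ls_iter_def scp_sub_def is_arg_min_def by blast+

lemma scp_ls_iter_Lg_bounded: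
  assumes iter: "scp_ls_iter f gradf P1 P2 g gradg c Llo Lup \<tau> xt xn Lft Lgt"
    and feasible_if_large:
      "\<And>z y w. (\<And>i. M \<le> w $ i) \<Longrightarrow> (\<And>i. Gbar g gradg z y w i \<le> 0) \<Longrightarrow> feasible g z"
    and L_pos: "0 < Llo" and tau_gt: "1 < \<tau>"
  shows "0 \<le> Lgt $ i \<and> Lgt $ i \<le> max 1 (\<tau> * M / Llo) * Lup"
proof -
  from iter obtain \<xi> lfs lgs zs K where
    init: "\<forall>i. Llo \<le> lgs 0 $ i \<and> lgs 0 $ i \<le> Lup" and
    sub: "\<forall>k\<le>K. scp_sub gradf P1 g gradg xt \<xi> (lfs k) (lgs k) (zs k)" and
    trials: "\<forall>k<K. \<not> scp_accept f P1 P2 g c xt (zs k) \<and>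
               (if feasible g (zs k)
                then lfs (Suc k) = \<tau> * lfs k \<and> lgs (Suc k) = lgs k
                else lfs (Suc k) = lfs k \<and> lgs (Suc k) = \<tau> *\<^sub>R lgs k)" and
    "Lgt = lgs K"
    unfolding scp_ls_iter_def by blast
  have "lgs (Suc k) = lgs k \<or> ((\<exists>i. lgs k $ i < M) \<and> lgs (Suc k) = \<tau> *\<^sub>R lgs k)"
    if "k < K" for k
  proof (cases "feasible g (zs k)")
    case False
    have "\<forall>i. Gbar g gradg (zs k) xt (lgs k) i \<le> 0"
      using sub that unfolding scp_sub_def is_arg_min_def by auto
    with False feasible_if_large have "\<exists>i. lgs k $ i < M" by (meson not_le)
    with False trials that show ?thesis by auto
  qed (use trials that in auto)
  then obtain a where a: "Lgt = a *\<^sub>R lgs 0" "1 \<le> a" "a \<le> max 1 (\<tau> * M / Llo)"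
    using backtracking_scale_bounded[of Llo lgs \<tau> K M K] init L_pos tau_gt \<open>Lgt = lgs K\<close> by auto
  have "0 \<le> lgs 0 $ i" "lgs 0 $ i \<le> Lup" using init L_pos by (auto intro: order.trans[of 0 Llo])
  with a show ?thesis by (auto intro: mult_mono)
qed

lemma scp_ls_seq_feasible_decseq:
  assumes gen: "scp_ls_seq f gradf P1 P2 g gradg c Llo Lup \<tau> x Lf Lg" and c_pos: "0 < c"
  shows "feasible g (x t)" and "decseq (\<lambda>t. f (x t) + P1 (x t) - P2 (x t))"
proof -
  have accept: "scp_accept f P1 P2 g c (x t) (x (Suc t))" for t
    using gen scp_ls_iter_accepted(1) unfolding scp_ls_seq_def by blast
  have feas: "feasible g (x t)" for t
    using gen accept unfolding scp_ls_seq_def scp_accept_def by (cases t) auto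
  then show "feasible g (x t)" .
  show "decseq (\<lambda>t. f (x t) + P1 (x t) - P2 (x t))"
  proof (rule decseq_SucI)
    fix t
    have "0 \<le> c / 2 * (norm (x (Suc t) - x t))\<^sup>2" using c_pos by simp
    with accept[of t] feas[of t] feas[of "Suc t"]
    show "f (x (Suc t)) + P1 (x (Suc t)) - P2 (x (Suc t)) \<le> f (x t) + P1 (x t) - P2 (x t)"
      unfolding scp_accept_def Fobj_def by simp
  qed
qed

lemma scp_ls_seq_Lg_bounded:
  fixes g :: "'m::finite \<Rightarrow> 'a::real_inner \<Rightarrow> real"
  assumes gen: "scp_ls_seq f gradf P1 P2 g gradg c Llo Lup \<tau> x Lf Lg"
    and g_grad: "\<And>i z. (g i has_derivative (\<lambda>h. inner (gradg i z) h)) (at z)"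
    and g_lip: "\<And>i. \<exists>L. \<forall>y z. norm (gradg i y - gradg i z) \<le> L * norm (y - z)"
    and L_pos: "0 < Llo" and tau_gt: "1 < \<tau>"
  shows "bounded (range Lg)"
proof -
  obtain M where M: "\<And>i y z. norm (gradg i y - gradg i z) \<le> M * norm (y - z)"
    using finite_family_common_Lipschitz[of gradg, OF g_lip] by blast
  have iter: "scp_ls_iter f gradf P1 P2 g gradg c Llo Lup \<tau> (x t) (x (Suc t)) (Lf t) (Lg t)" for t
    using gen unfolding scp_ls_seq_def by blast
  have "0 \<le> Lg t $ i \<and> Lg t $ i \<le> max 1 (\<tau> * M / Llo) * Lup" for t i
    by (intro scp_ls_iter_Lg_bounded[OF iter _ L_pos tau_gt] Gbar_nonpos_imp_feasible[OF g_grad M])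
  then show ?thesis
    by (intro bounded_range_vec_if_entries_bounded[where B = "max 1 (\<tau> * M / Llo) * Lup"])
      (simp add: abs_le_iff)
qed

lemma Fbar_on_accum_points:
  fixes g :: "'m::finite \<Rightarrow> 'a::real_inner \<Rightarrow> real"
  assumes h_cont: "continuous_on UNIV (\<lambda>z. f z + P1 z - P2 z)"
    and g_cont: "\<And>i. continuous_on UNIV (g i)" and g_C1: "\<And>i. continuous_on UNIV (gradg i)"
    and lin: "\<And>t i. Gbar g gradg (z t) (y t) (w t) i \<le> 0"
    and lim: "(\<lambda>t. f (z t) + P1 (z t) - P2 (z t)) \<longlonglongrightarrow> l"
    and acc: "(u, v, W) \<in> accum_points (\<lambda>t. (z t, y t, w t))"
  shows "Fbar f P1 P2 g gradg u v W = ereal l"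
proof -
  from acc obtain r where r: "strict_mono r" "((\<lambda>t. (z t, y t, w t)) \<circ> r) \<longlonglongrightarrow> (u, v, W)"
    unfolding accum_points_def by blast
  have zu: "(z \<circ> r) \<longlonglongrightarrow> u" and yv: "(y \<circ> r) \<longlonglongrightarrow> v" and wW: "(w \<circ> r) \<longlonglongrightarrow> W"
    using tendsto_fst[OF r(2)] tendsto_snd[OF r(2)]
      tendsto_fst[OF tendsto_snd[OF r(2)]] tendsto_snd[OF tendsto_snd[OF r(2)]]
    by (simp_all add: o_def)
  have "Gbar g gradg u v W i \<le> 0" for i
  proof (rule LIMSEQ_le_const2)
    show "(\<lambda>n. Gbar g gradg ((z \<circ> r) n) ((y \<circ> r) n) ((w \<circ> r) n) i) \<longlonglongrightarrow> Gbar g gradg u v W i"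
      by (rule tendsto_Gbar[OF g_cont g_C1 zu yv wW])
  qed (use lin in auto)
  moreover have "f u + P1 u - P2 u = l"
  proof (rule LIMSEQ_unique)
    show "(\<lambda>n. f (z (r n)) + P1 (z (r n)) - P2 (z (r n))) \<longlonglongrightarrow> f u + P1 u - P2 u"
      using continuous_on_tendsto_compose[OF h_cont zu] by (simp add: o_def)
    show "(\<lambda>n. f (z (r n)) + P1 (z (r n)) - P2 (z (r n))) \<longlonglongrightarrow> l"
      using LIMSEQ_subseq_LIMSEQ[OF lim r(1)] by (simp add: o_def)
  qed
  ultimately show ?thesis unfolding Fbar_def by simp
qed

theorem mainTheorem4:
  fixes f :: "'a::euclidean_space \<Rightarrow> real" and gradf :: "'a \<Rightarrow> 'a"
    and P1 P2 :: "'a \<Rightarrow> real"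
    and g :: "'m::finite \<Rightarrow> 'a \<Rightarrow> real" and gradg :: "'m \<Rightarrow> 'a \<Rightarrow> 'a"
    and c Llo Lup \<tau> :: real
    and x :: "nat \<Rightarrow> 'a" and Lf :: "nat \<Rightarrow> real" and Lg :: "nat \<Rightarrow> real^'m"
  assumes f_grad: "\<And>z. (f has_derivative (\<lambda>h. inner (gradf z) h)) (at z)"
    and f_C1: "continuous_on UNIV gradf"
    and f_lip: "\<exists>L. \<forall>y z. norm (gradf y - gradf z) \<le> L * norm (y - z)"
    and P1_cvx: "convex_on UNIV P1" and P1_cont: "continuous_on UNIV P1"
    and P2_cvx: "convex_on UNIV P2" and P2_cont: "continuous_on UNIV P2"
    and g_cont: "\<And>i. continuous_on UNIV (g i)"
    and g_grad: "\<And>i z. (g i has_derivative (\<lambda>h. inner (gradg i z) h)) (at z)"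
    and g_C1: "\<And>i. continuous_on UNIV (gradg i)"
    and g_lip: "\<And>i. \<exists>L. \<forall>y z. norm (gradg i y - gradg i z) \<le> L * norm (y - z)"
    and feas_nonempty: "\<exists>z. feasible g z"
    and F_lb: "level_bounded (Fobj f P1 P2 g)"
    and MFCQ: "\<And>z. feasible g z \<Longrightarrow> \<exists>d. \<forall>i. g i z = 0 \<longrightarrow> inner (gradg i z) d < 0"
    and c_pos: "c > 0" and L_pos: "0 < Llo" and L_lt: "Llo < Lup" and tau_gt: "\<tau> > 1"
    and gen: "scp_ls_seq f gradf P1 P2 g gradg c Llo Lup \<tau> x Lf Lg"
  shows "accum_points (\<lambda>t. (x (Suc t), x t, Lg t)) \<noteq> {} \<and>
         (\<exists>Fstar::real.
            (\<lambda>t. Fbar f P1 P2 g gradg (x (Suc t)) (x t) (Lg t)) \<longlonglongrightarrow> ereal Fstar \<and>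
            (\<forall>(u, v, w) \<in> accum_points (\<lambda>t. (x (Suc t), x t, Lg t)).
               Fbar f P1 P2 g gradg u v w = ereal Fstar))"
proof -
  define h where "h = (\<lambda>z. f z + P1 z - P2 z)"
  have iter: "scp_ls_iter f gradf P1 P2 g gradg c Llo Lup \<tau> (x t) (x (Suc t)) (Lf t) (Lg t)" for t
    using gen unfolding scp_ls_seq_def by blast
  note lin = scp_ls_iter_accepted(2)[OF iter]
  note feas = scp_ls_seq_feasible_decseq(1)[OF gen c_pos]
  have dec: "decseq (\<lambda>t. h (x t))"
    unfolding h_def by (rule scp_ls_seq_feasible_decseq(2)[OF gen c_pos])
  have "continuous_on UNIV f"
    using f_grad by (meson continuous_at_imp_continuous_on has_derivative_continuous)
  then have h_cont: "continuous_on UNIV h"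
    unfolding h_def by (intro continuous_intros P1_cont P2_cont)
  have "bounded (range x)"
    using level_bounded_imp_bounded_range[OF F_lb, of x "h (x 0)"] feas dec
    by (simp add: Fobj_def h_def decseq_def)
  then obtain Fstar where lim: "(\<lambda>t. h (x t)) \<longlonglongrightarrow> Fstar"
    using decseq_continuous_bounded_convergent h_cont dec by blast
  have "bounded (range x \<times> range x \<times> range Lg)"
    using \<open>bounded (range x)\<close> scp_ls_seq_Lg_bounded[OF gen g_grad g_lip L_pos tau_gt]
    by (intro bounded_Times)
  then have "bounded (range (\<lambda>t. (x (Suc t), x t, Lg t)))"
    by (rule bounded_subset) auto
  moreover have "(\<lambda>t. Fbar f P1 P2 g gradg (x (Suc t)) (x t) (Lg t)) = (\<lambda>t. ereal (h (x (Suc t))))"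
    using lin by (simp add: Fbar_def h_def)
  moreover note lim_Suc = LIMSEQ_Suc[OF lim]
  ultimately show ?thesis
    using accum_points_nonempty tendsto_ereal[OF lim_Suc]
      Fbar_on_accum_points[OF h_cont[unfolded h_def] g_cont g_C1 lin lim_Suc[unfolded h_def]]
    by auto
qed

end
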